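(* For $R_1,R_2\in\mathrm{DGRings}^{0,-1}$, the category $\mathrm{Corr}_{\mathrm{adm}}(R_1,R_2)$ is a groupoid.
   Context: Rings are commutative and unital. $\mathrm{DGRings}^{0,-1}$ is the category of commutative DG rings $R$ with $R^i=0$ for $i\ne 0,-1$. Equivalently, such $R$ is a ring $R^0$, an $R^0$-module $R^{-1}$ and an $R^0$-linear $d:R^{-1}\to R^0$ with $d(x)y=d(y)x$. A morphism is a quasi-isomorphism if it induces isomorphisms on $\ker d$ and $\operatorname{coker} d$. A correspondence from $R_1$ to $R_2$ is a diagram $R_1\xleftarrow{f}R_{12}\xrightarrow{g}R_2$ in $\mathrm{DGRings}^{0,-1}$. A morphism from it to $R_1\xleftarrow{f'}R'_{12}\xrightarrow{g'}R_2$ is a morphism $h:R_{12}\to R'_{12}$ with $f'h=f$, $g'h=g$. The correspondence is admissible if $f$ is a quasi-isomorphism and the map $R_{12}^{-1}\to R_1^{-1}\times R_2^{-1}$ is an isomorphism. $\mathrm{Corr}_{\mathrm{adm}}(R_1,R_2)$ is the full subcategory of admissible correspondences. *)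

theory Defs
  imports "HOL-Algebra.Module" "HOL-Algebra.RingHom"
begin

text \<open>A commutative DG ring concentrated in degrees 0 and -1:
  a commutative ring R^0, an R^0-module R^{-1}, and an R^0-linear
  d : R^{-1} -> R^0 with d(x) y = d(y) x.\<close>

record ('a, 'b) dgr =
  deg0 :: "'a ring"
  degm1 :: "('a, 'b) module"
  diff :: "'b \<Rightarrow> 'a"

definition is_dgr :: "('a, 'b) dgr \<Rightarrow> bool" where
  "is_dgr R \<longleftrightarrow>
     cring (deg0 R) \<and> module (deg0 R) (degm1 R) \<and>
     diff R \<in> carrier (degm1 R) \<rightarrow> carrier (deg0 R) \<and>
     (\<forall>x\<in>carrier (degm1 R). \<forall>y\<in>carrier (degm1 R).
        diff R (x \<oplus>\<^bsub>degm1 R\<^esub> y) = diff R x \<oplus>\<^bsub>deg0 R\<^esub> diff R y) \<and>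
     (\<forall>a\<in>carrier (deg0 R). \<forall>x\<in>carrier (degm1 R).
        diff R (a \<odot>\<^bsub>degm1 R\<^esub> x) = a \<otimes>\<^bsub>deg0 R\<^esub> diff R x) \<and>
     (\<forall>x\<in>carrier (degm1 R). \<forall>y\<in>carrier (degm1 R).
        diff R x \<odot>\<^bsub>degm1 R\<^esub> y = diff R y \<odot>\<^bsub>degm1 R\<^esub> x)"

type_synonym ('a, 'b, 'c, 'd) dgmor = "('a \<Rightarrow> 'c) \<times> ('b \<Rightarrow> 'd)"

definition is_dgmor :: "('a, 'b) dgr \<Rightarrow> ('c, 'd) dgr \<Rightarrow> ('a, 'b, 'c, 'd) dgmor \<Rightarrow> bool" where
  "is_dgmor R S f \<longleftrightarrow>
     fst f \<in> ring_hom (deg0 R) (deg0 S) \<and>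
     snd f \<in> carrier (degm1 R) \<rightarrow> carrier (degm1 S) \<and>
     (\<forall>x\<in>carrier (degm1 R). \<forall>y\<in>carrier (degm1 R).
        snd f (x \<oplus>\<^bsub>degm1 R\<^esub> y) = snd f x \<oplus>\<^bsub>degm1 S\<^esub> snd f y) \<and>
     (\<forall>a\<in>carrier (deg0 R). \<forall>x\<in>carrier (degm1 R).
        snd f (a \<odot>\<^bsub>degm1 R\<^esub> x) = fst f a \<odot>\<^bsub>degm1 S\<^esub> snd f x) \<and>
     (\<forall>x\<in>carrier (degm1 R). diff S (snd f x) = fst f (diff R x))"

definition dg_comp :: "('c, 'd, 'e, 'f) dgmor \<Rightarrow> ('a, 'b, 'c, 'd) dgmor \<Rightarrow> ('a, 'b, 'e, 'f) dgmor" where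
  "dg_comp g f = (fst g \<circ> fst f, snd g \<circ> snd f)"

definition dg_id :: "('a, 'b, 'a, 'b) dgmor" where
  "dg_id = (id, id)"

text \<open>Equality of morphisms R -> S (maps are only relevant on the carriers).\<close>
definition dgmor_eq :: "('a, 'b) dgr \<Rightarrow> ('a, 'b, 'c, 'd) dgmor \<Rightarrow> ('a, 'b, 'c, 'd) dgmor \<Rightarrow> bool" where
  "dgmor_eq R f g \<longleftrightarrow>
     (\<forall>a\<in>carrier (deg0 R). fst f a = fst g a) \<and> (\<forall>x\<in>carrier (degm1 R). snd f x = snd g x)"

definition dg_ker :: "('a, 'b) dgr \<Rightarrow> 'b set" where
  "dg_ker R = {x \<in> carrier (degm1 R). diff R x = \<zero>\<^bsub>deg0 R\<^esub>}"

definition dg_im :: "('a, 'b) dgr \<Rightarrow> 'a set" where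
  "dg_im R = diff R ` carrier (degm1 R)"

text \<open>Quasi-isomorphism: the induced maps on ker d and on coker d = R^0 / im d
  are bijective.  The map on cokernels is r + im d_R |-> f0 r + im d_S.\<close>
definition is_quasi_iso :: "('a, 'b) dgr \<Rightarrow> ('c, 'd) dgr \<Rightarrow> ('a, 'b, 'c, 'd) dgmor \<Rightarrow> bool" where
  "is_quasi_iso R S f \<longleftrightarrow>
     is_dgmor R S f \<and>
     bij_betw (snd f) (dg_ker R) (dg_ker S) \<and>
     (\<forall>r\<in>carrier (deg0 R). \<forall>r'\<in>carrier (deg0 R).
        fst f r \<ominus>\<^bsub>deg0 S\<^esub> fst f r' \<in> dg_im S \<longrightarrow> r \<ominus>\<^bsub>deg0 R\<^esub> r' \<in> dg_im R) \<and>
     (\<forall>s\<in>carrier (deg0 S). \<exists>r\<in>carrier (deg0 R).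
        s \<ominus>\<^bsub>deg0 S\<^esub> fst f r \<in> dg_im S)"

definition is_corr :: "('a, 'b) dgr \<Rightarrow> ('c, 'd) dgr \<Rightarrow> ('e, 'h) dgr
    \<Rightarrow> ('e, 'h, 'a, 'b) dgmor \<Rightarrow> ('e, 'h, 'c, 'd) dgmor \<Rightarrow> bool" where
  "is_corr R1 R2 R12 f g \<longleftrightarrow> is_dgr R12 \<and> is_dgmor R12 R1 f \<and> is_dgmor R12 R2 g"

definition is_adm_corr :: "('a, 'b) dgr \<Rightarrow> ('c, 'd) dgr \<Rightarrow> ('e, 'h) dgr
    \<Rightarrow> ('e, 'h, 'a, 'b) dgmor \<Rightarrow> ('e, 'h, 'c, 'd) dgmor \<Rightarrow> bool" where
  "is_adm_corr R1 R2 R12 f g \<longleftrightarrow>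
     is_corr R1 R2 R12 f g \<and> is_quasi_iso R12 R1 f \<and>
     bij_betw (\<lambda>x. (snd f x, snd g x)) (carrier (degm1 R12))
              (carrier (degm1 R1) \<times> carrier (degm1 R2))"

definition is_corr_mor ::
  "('e, 'h) dgr \<Rightarrow> ('e, 'h, 'a, 'b) dgmor \<Rightarrow> ('e, 'h, 'c, 'd) dgmor
   \<Rightarrow> ('i, 'j) dgr \<Rightarrow> ('i, 'j, 'a, 'b) dgmor \<Rightarrow> ('i, 'j, 'c, 'd) dgmor
   \<Rightarrow> ('e, 'h, 'i, 'j) dgmor \<Rightarrow> bool" where
  "is_corr_mor R12 f g R12' f' g' h \<longleftrightarrow>
     is_dgmor R12 R12' h \<and>
     dgmor_eq R12 (dg_comp f' h) f \<and> dgmor_eq R12 (dg_comp g' h) g"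

end

theory Submission
  imports Defs "HOL-Algebra.QuotRing"
begin

text \<open>
  In degree -1, both R12^{-1} and R12'^{-1} map bijectively onto R1^{-1} \<times> R2^{-1},
  compatibly with h, so h is bijective in degree -1. Since f = f' h with f and f'
  quasi-isomorphisms, h is a quasi-isomorphism (two out of three). A quasi-isomorphism
  that is bijective in degree -1 is bijective in degree 0: if h r = h r', then r - r' = d x
  by injectivity on coker d; as d (h x) = 0, surjectivity on ker d gives a cycle y with
  h y = h x, so x = y and r = r'. Surjectivity follows from surjectivity on coker d and in
  degree -1. Finally the componentwise inverse of a bijective morphism is again a
  morphism of DG rings and of correspondences.
\<close>

lemma (in abelian_group) minus_eq_zero_imp_eq:
  "a \<in> carrier G \<Longrightarrow> b \<in> carrier G \<Longrightarrow> a \<ominus> b = \<zero> \<Longrightarrow> a = b"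
  by (metis add.inv_closed add.inv_equality minus_eq minus_minus)

lemma (in abelian_group) add_minus_cancel:
  "a \<in> carrier G \<Longrightarrow> b \<in> carrier G \<Longrightarrow> b \<oplus> (a \<ominus> b) = a"
  by (simp add: minus_eq a_lcomm r_neg)

lemma is_dgr_diff_zero:
  assumes "is_dgr R"
  shows "diff R \<zero>\<^bsub>degm1 R\<^esub> = \<zero>\<^bsub>deg0 R\<^esub>"
proof -
  interpret A: cring "deg0 R" using assms unfolding is_dgr_def by simp
  interpret M: module "deg0 R" "degm1 R" using assms unfolding is_dgr_def by simp
  let ?d0 = "diff R \<zero>\<^bsub>degm1 R\<^esub>"
  have d0: "?d0 \<in> carrier (deg0 R)" using assms unfolding is_dgr_def by auto
  have "?d0 \<oplus>\<^bsub>deg0 R\<^esub> ?d0 = ?d0"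
    using assms unfolding is_dgr_def by (metis M.zero_closed M.l_zero)
  then show ?thesis using d0 by simp
qed

lemma zero_in_dg_im:
  assumes "is_dgr R"
  shows "\<zero>\<^bsub>deg0 R\<^esub> \<in> dg_im R"
proof -
  interpret M: module "deg0 R" "degm1 R" using assms unfolding is_dgr_def by simp
  show ?thesis
    unfolding dg_im_def using is_dgr_diff_zero[OF assms, symmetric] M.zero_closed by (rule image_eqI)
qed

lemma dgmor_ring_hom_cring:
  assumes "is_dgr R" "is_dgr S" "is_dgmor R S h"
  shows "ring_hom_cring (deg0 R) (deg0 S) (fst h)"
  using assms unfolding is_dgr_def is_dgmor_def
  by (intro ring_hom_cringI ring_hom_ringI2) (auto dest: cring.axioms(1))

lemma dgmor_image_dg_ker:
  assumes "is_dgr R" "is_dgr S" "is_dgmor R S h"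
  shows "snd h ` dg_ker R \<subseteq> dg_ker S"
proof -
  interpret ring_hom_cring "deg0 R" "deg0 S" "fst h" using assms by (rule dgmor_ring_hom_cring)
  show ?thesis using assms(3) unfolding dg_ker_def is_dgmor_def by auto
qed

lemma dgmor_image_dg_im:
  assumes "is_dgmor R S h"
  shows "fst h ` dg_im R \<subseteq> dg_im S"
  using assms unfolding dg_im_def is_dgmor_def by (auto intro!: image_eqI[OF sym])

lemma dgmor_minus:
  assumes "is_dgr R" "is_dgr S" "is_dgmor R S h"
    and "a \<in> carrier (deg0 R)" "b \<in> carrier (deg0 R)"
  shows "fst h (a \<ominus>\<^bsub>deg0 R\<^esub> b) = fst h a \<ominus>\<^bsub>deg0 S\<^esub> fst h b"
proof -
  interpret ring_hom_cring "deg0 R" "deg0 S" "fst h" using assms(1-3) by (rule dgmor_ring_hom_cring)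
  show ?thesis using assms(4,5) by (simp add: R.minus_eq S.minus_eq)
qed

lemma is_quasi_iso_comp_cancel:
  assumes R: "is_dgr R" and R': "is_dgr R'" and S: "is_dgr S"
    and h: "is_dgmor R R' h" and f': "is_quasi_iso R' S f'" and f: "is_quasi_iso R S f"
    and comp: "dgmor_eq R (dg_comp f' h) f"
  shows "is_quasi_iso R R' h"
proof -
  have f'_mor: "is_dgmor R' S f'" using f' unfolding is_quasi_iso_def by simp
  have comp0: "\<And>a. a \<in> carrier (deg0 R) \<Longrightarrow> fst f' (fst h a) = fst f a"
    and comp1: "\<And>x. x \<in> carrier (degm1 R) \<Longrightarrow> snd f' (snd h x) = snd f x"
    using comp unfolding dgmor_eq_def dg_comp_def by auto
  have h0_closed: "\<And>a. a \<in> carrier (deg0 R) \<Longrightarrow> fst h a \<in> carrier (deg0 R')"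
    using h unfolding is_dgmor_def by (auto intro: ring_hom_closed)
  have "bij_betw (snd f' \<circ> snd h) (dg_ker R) (dg_ker S)"
    using f comp1 unfolding is_quasi_iso_def
    by (subst bij_betw_cong[of _ _ "snd f"]) (auto simp: dg_ker_def)
  then have ker: "bij_betw (snd h) (dg_ker R) (dg_ker R')"
    using bij_betw_comp_iff2 f' dgmor_image_dg_ker[OF R R' h] unfolding is_quasi_iso_def by blast
  have coker_inj: "r \<ominus>\<^bsub>deg0 R\<^esub> r' \<in> dg_im R"
    if r: "r \<in> carrier (deg0 R)" "r' \<in> carrier (deg0 R)"
      and im: "fst h r \<ominus>\<^bsub>deg0 R'\<^esub> fst h r' \<in> dg_im R'" for r r'
  proof -
    have "fst f' (fst h r \<ominus>\<^bsub>deg0 R'\<^esub> fst h r') \<in> dg_im S"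
      using im dgmor_image_dg_im[OF f'_mor] by blast
    then have "fst f r \<ominus>\<^bsub>deg0 S\<^esub> fst f r' \<in> dg_im S"
      using r comp0 h0_closed dgmor_minus[OF R' S f'_mor] by simp
    then show ?thesis using f r unfolding is_quasi_iso_def by blast
  qed
  have coker_surj: "\<exists>r\<in>carrier (deg0 R). s \<ominus>\<^bsub>deg0 R'\<^esub> fst h r \<in> dg_im R'"
    if s: "s \<in> carrier (deg0 R')" for s
  proof -
    have "fst f' s \<in> carrier (deg0 S)"
      using s f'_mor unfolding is_dgmor_def by (auto intro: ring_hom_closed)
    then obtain r where r: "r \<in> carrier (deg0 R)" "fst f' s \<ominus>\<^bsub>deg0 S\<^esub> fst f r \<in> dg_im S"
      using f unfolding is_quasi_iso_def by blast
    then have "fst f' s \<ominus>\<^bsub>deg0 S\<^esub> fst f' (fst h r) \<in> dg_im S" using comp0 by simp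
    then have "s \<ominus>\<^bsub>deg0 R'\<^esub> fst h r \<in> dg_im R'"
      using f' s r h0_closed unfolding is_quasi_iso_def by blast
    then show ?thesis using r by blast
  qed
  show ?thesis unfolding is_quasi_iso_def using h ker coker_inj coker_surj by blast
qed

lemma quasi_iso_inj_on_deg0:
  assumes R: "is_dgr R" and S: "is_dgr S" and h: "is_quasi_iso R S h"
    and inj1: "inj_on (snd h) (carrier (degm1 R))"
  shows "inj_on (fst h) (carrier (deg0 R))"
proof (rule inj_onI)
  fix r r' assume r: "r \<in> carrier (deg0 R)" "r' \<in> carrier (deg0 R)" and eq: "fst h r = fst h r'"
  have h_mor: "is_dgmor R S h" using h unfolding is_quasi_iso_def by simp
  interpret ring_hom_cring "deg0 R" "deg0 S" "fst h" using R S h_mor by (rule dgmor_ring_hom_cring)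
  have h_diff: "\<And>x. x \<in> carrier (degm1 R) \<Longrightarrow> diff S (snd h x) = fst h (diff R x)"
    and h1_closed: "\<And>x. x \<in> carrier (degm1 R) \<Longrightarrow> snd h x \<in> carrier (degm1 S)"
    using h_mor unfolding is_dgmor_def by auto
  have hr: "fst h r \<ominus>\<^bsub>deg0 S\<^esub> fst h r' = \<zero>\<^bsub>deg0 S\<^esub>"
    unfolding eq using r by (simp add: S.minus_eq S.r_neg)
  then have "fst h r \<ominus>\<^bsub>deg0 S\<^esub> fst h r' \<in> dg_im S"
    using zero_in_dg_im[OF S] by simp
  then have "r \<ominus>\<^bsub>deg0 R\<^esub> r' \<in> dg_im R" using h r unfolding is_quasi_iso_def by blast
  then obtain x where x: "x \<in> carrier (degm1 R)" "diff R x = r \<ominus>\<^bsub>deg0 R\<^esub> r'"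
    unfolding dg_im_def by auto
  have "diff S (snd h x) = fst h r \<ominus>\<^bsub>deg0 S\<^esub> fst h r'"
    using x r h_diff by (simp add: R.minus_eq S.minus_eq)
  then have "snd h x \<in> dg_ker S"
    unfolding dg_ker_def using hr h1_closed[OF x(1)] by simp
  then obtain y where y: "y \<in> dg_ker R" "snd h y = snd h x"
    using h unfolding is_quasi_iso_def by (metis bij_betw_imp_surj_on imageE)
  have "y = x" using y x(1) inj1 unfolding dg_ker_def by (auto dest: inj_onD)
  then have "r \<ominus>\<^bsub>deg0 R\<^esub> r' = \<zero>\<^bsub>deg0 R\<^esub>" using x y unfolding dg_ker_def by simp
  then show "r = r'" using r by (simp add: R.minus_eq_zero_imp_eq)
qed

lemma quasi_iso_surj_deg0:
  assumes R: "is_dgr R" and S: "is_dgr S" and h: "is_quasi_iso R S h"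
    and surj1: "snd h ` carrier (degm1 R) = carrier (degm1 S)"
  shows "fst h ` carrier (deg0 R) = carrier (deg0 S)"
proof
  have h_mor: "is_dgmor R S h" using h unfolding is_quasi_iso_def by simp
  interpret ring_hom_cring "deg0 R" "deg0 S" "fst h" using R S h_mor by (rule dgmor_ring_hom_cring)
  have d_closed: "\<And>x. x \<in> carrier (degm1 R) \<Longrightarrow> diff R x \<in> carrier (deg0 R)"
    using R unfolding is_dgr_def by auto
  have h_diff: "\<And>x. x \<in> carrier (degm1 R) \<Longrightarrow> diff S (snd h x) = fst h (diff R x)"
    using h_mor unfolding is_dgmor_def by auto
  show "fst h ` carrier (deg0 R) \<subseteq> carrier (deg0 S)" using hom_closed by blast
  show "carrier (deg0 S) \<subseteq> fst h ` carrier (deg0 R)"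
  proof
    fix s assume s: "s \<in> carrier (deg0 S)"
    then obtain r where r: "r \<in> carrier (deg0 R)" "s \<ominus>\<^bsub>deg0 S\<^esub> fst h r \<in> dg_im S"
      using h unfolding is_quasi_iso_def by blast
    then obtain m where m: "m \<in> carrier (degm1 S)" "diff S m = s \<ominus>\<^bsub>deg0 S\<^esub> fst h r"
      unfolding dg_im_def by auto
    then obtain x where x: "x \<in> carrier (degm1 R)" "snd h x = m"
      using surj1 by (metis imageE)
    have "s = fst h r \<oplus>\<^bsub>deg0 S\<^esub> (s \<ominus>\<^bsub>deg0 S\<^esub> fst h r)"
      using s r by (simp add: S.add_minus_cancel)
    also have "\<dots> = fst h r \<oplus>\<^bsub>deg0 S\<^esub> fst h (diff R x)"
      using x m h_diff by metis
    also have "\<dots> = fst h (r \<oplus>\<^bsub>deg0 R\<^esub> diff R x)" using x r d_closed by simp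
    finally show "s \<in> fst h ` carrier (deg0 R)" using r x d_closed by blast
  qed
qed

lemma quasi_iso_bij_deg0:
  assumes "is_dgr R" and "is_dgr S" and "is_quasi_iso R S h"
    and "bij_betw (snd h) (carrier (degm1 R)) (carrier (degm1 S))"
  shows "bij_betw (fst h) (carrier (deg0 R)) (carrier (deg0 S))"
proof -
  have "inj_on (snd h) (carrier (degm1 R))" and "snd h ` carrier (degm1 R) = carrier (degm1 S)"
    using assms(4) unfolding bij_betw_def by simp_all
  then show ?thesis
    unfolding bij_betw_def
    using quasi_iso_inj_on_deg0[OF assms(1-3)] quasi_iso_surj_deg0[OF assms(1-3)] by simp
qed

lemma adm_corr_mor_bij_degm1:
  assumes "is_adm_corr R1 R2 R12 f g" and "is_adm_corr R1 R2 R12' f' g'"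
    and "is_corr_mor R12 f g R12' f' g' h"
  shows "bij_betw (snd h) (carrier (degm1 R12)) (carrier (degm1 R12'))"
proof -
  let ?p = "\<lambda>x. (snd f x, snd g x)" and ?p' = "\<lambda>x. (snd f' x, snd g' x)"
  have p: "bij_betw ?p (carrier (degm1 R12)) (carrier (degm1 R1) \<times> carrier (degm1 R2))"
    and p': "bij_betw ?p' (carrier (degm1 R12')) (carrier (degm1 R1) \<times> carrier (degm1 R2))"
    using assms(1,2) unfolding is_adm_corr_def by simp_all
  have "\<And>x. x \<in> carrier (degm1 R12) \<Longrightarrow> (?p' \<circ> snd h) x = ?p x"
    using assms(3) unfolding is_corr_mor_def dgmor_eq_def dg_comp_def by simp
  then have "bij_betw (?p' \<circ> snd h) (carrier (degm1 R12)) (carrier (degm1 R1) \<times> carrier (degm1 R2))"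
    using p by (rule bij_betw_cong[THEN iffD2])
  moreover have "snd h ` carrier (degm1 R12) \<subseteq> carrier (degm1 R12')"
    using assms(3) unfolding is_corr_mor_def is_dgmor_def by auto
  ultimately show ?thesis using bij_betw_comp_iff2[OF p'] by blast
qed

definition dgmor_inv :: "('a, 'b) dgr \<Rightarrow> ('a, 'b, 'c, 'd) dgmor \<Rightarrow> ('c, 'd, 'a, 'b) dgmor" where
  "dgmor_inv R h = (inv_into (carrier (deg0 R)) (fst h), inv_into (carrier (degm1 R)) (snd h))"

lemma dgmor_inv_comp_left:
  assumes "bij_betw (fst h) (carrier (deg0 R)) (carrier (deg0 S))"
    and "bij_betw (snd h) (carrier (degm1 R)) (carrier (degm1 S))"
  shows "dgmor_eq R (dg_comp (dgmor_inv R h) h) dg_id"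
  using assms unfolding dgmor_eq_def dg_comp_def dg_id_def dgmor_inv_def
  by (simp add: bij_betw_inv_into_left)

lemma dgmor_inv_comp_right:
  assumes "bij_betw (fst h) (carrier (deg0 R)) (carrier (deg0 S))"
    and "bij_betw (snd h) (carrier (degm1 R)) (carrier (degm1 S))"
  shows "dgmor_eq S (dg_comp h (dgmor_inv R h)) dg_id"
  using assms unfolding dgmor_eq_def dg_comp_def dg_id_def dgmor_inv_def
  by (simp add: bij_betw_inv_into_right)

lemma is_dgmor_inv:
  assumes R: "is_dgr R" and S: "is_dgr S" and h: "is_dgmor R S h"
    and bij0: "bij_betw (fst h) (carrier (deg0 R)) (carrier (deg0 S))"
    and bij1: "bij_betw (snd h) (carrier (degm1 R)) (carrier (degm1 S))"
  shows "is_dgmor S R (dgmor_inv R h)"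
proof -
  let ?k0 = "inv_into (carrier (deg0 R)) (fst h)" and ?k1 = "inv_into (carrier (degm1 R)) (snd h)"
  interpret ring_hom_cring "deg0 R" "deg0 S" "fst h" using R S h by (rule dgmor_ring_hom_cring)
  interpret M: module "deg0 R" "degm1 R" using R unfolding is_dgr_def by simp
  have "fst h \<in> ring_iso (deg0 R) (deg0 S)" using h bij0 unfolding is_dgmor_def ring_iso_def by simp
  then have k0_hom: "?k0 \<in> ring_hom (deg0 S) (deg0 R)"
    using ring_iso_set_sym[OF R.ring_axioms] unfolding ring_iso_def by blast
  have k0_closed: "\<And>a. a \<in> carrier (deg0 S) \<Longrightarrow> ?k0 a \<in> carrier (deg0 R)"
    using bij_betw_apply[OF bij_betw_inv_into[OF bij0]] .
  have k1_closed: "\<And>x. x \<in> carrier (degm1 S) \<Longrightarrow> ?k1 x \<in> carrier (degm1 R)"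
    using bij_betw_apply[OF bij_betw_inv_into[OF bij1]] .
  have h_k0: "\<And>a. a \<in> carrier (deg0 S) \<Longrightarrow> fst h (?k0 a) = a"
    using bij0 by (rule bij_betw_inv_into_right)
  have h_k1: "\<And>x. x \<in> carrier (degm1 S) \<Longrightarrow> snd h (?k1 x) = x"
    using bij1 by (rule bij_betw_inv_into_right)
  have k0_eq: "\<And>a b. a \<in> carrier (deg0 R) \<Longrightarrow> fst h a = b \<Longrightarrow> ?k0 b = a"
    using inv_into_f_eq[OF bij_betw_imp_inj_on[OF bij0]] .
  have k1_eq: "\<And>x y. x \<in> carrier (degm1 R) \<Longrightarrow> snd h x = y \<Longrightarrow> ?k1 y = x"
    using inv_into_f_eq[OF bij_betw_imp_inj_on[OF bij1]] .
  have h1_add: "\<And>x y. x \<in> carrier (degm1 R) \<Longrightarrow> y \<in> carrier (degm1 R) \<Longrightarrow>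
      snd h (x \<oplus>\<^bsub>degm1 R\<^esub> y) = snd h x \<oplus>\<^bsub>degm1 S\<^esub> snd h y"
    and h1_smult: "\<And>a x. a \<in> carrier (deg0 R) \<Longrightarrow> x \<in> carrier (degm1 R) \<Longrightarrow>
      snd h (a \<odot>\<^bsub>degm1 R\<^esub> x) = fst h a \<odot>\<^bsub>degm1 S\<^esub> snd h x"
    and h_diff: "\<And>x. x \<in> carrier (degm1 R) \<Longrightarrow> diff S (snd h x) = fst h (diff R x)"
    using h unfolding is_dgmor_def by auto
  have d_closed: "\<And>x. x \<in> carrier (degm1 R) \<Longrightarrow> diff R x \<in> carrier (deg0 R)"
    using R unfolding is_dgr_def by auto
  show ?thesis
    unfolding is_dgmor_def dgmor_inv_def fst_conv snd_conv
  proof (intro conjI ballI funcsetI)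
    show "?k0 \<in> ring_hom (deg0 S) (deg0 R)" by (rule k0_hom)
  next
    show "?k1 x \<in> carrier (degm1 R)" if "x \<in> carrier (degm1 S)" for x using that by (rule k1_closed)
  next
    fix x y assume "x \<in> carrier (degm1 S)" "y \<in> carrier (degm1 S)"
    then show "?k1 (x \<oplus>\<^bsub>degm1 S\<^esub> y) = ?k1 x \<oplus>\<^bsub>degm1 R\<^esub> ?k1 y"
      by (intro k1_eq) (simp_all add: k1_closed h1_add h_k1)
  next
    fix a x assume "a \<in> carrier (deg0 S)" "x \<in> carrier (degm1 S)"
    then show "?k1 (a \<odot>\<^bsub>degm1 S\<^esub> x) = ?k0 a \<odot>\<^bsub>degm1 R\<^esub> ?k1 x"
      by (intro k1_eq) (simp_all add: k0_closed k1_closed h1_smult h_k0 h_k1)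
  next
    fix x assume x: "x \<in> carrier (degm1 S)"
    show "diff R (?k1 x) = ?k0 (diff S x)"
    proof (rule k0_eq[symmetric])
      show "diff R (?k1 x) \<in> carrier (deg0 R)" using x by (simp add: k1_closed d_closed)
      show "fst h (diff R (?k1 x)) = diff S x" using h_diff[OF k1_closed[OF x]] h_k1[OF x] by simp
    qed
  qed
qed

lemma is_corr_mor_inv:
  assumes R12: "is_dgr R12" and R12': "is_dgr R12'"
    and h: "is_corr_mor R12 f g R12' f' g' h"
    and bij0: "bij_betw (fst h) (carrier (deg0 R12)) (carrier (deg0 R12'))"
    and bij1: "bij_betw (snd h) (carrier (degm1 R12)) (carrier (degm1 R12'))"
  shows "is_corr_mor R12' f' g' R12 f g (dgmor_inv R12 h)"
proof -
  let ?k = "dgmor_inv R12 h"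
  have h_mor: "is_dgmor R12 R12' h" using h unfolding is_corr_mor_def by simp
  have k: "is_dgmor R12' R12 ?k" using R12 R12' h_mor bij0 bij1 by (rule is_dgmor_inv)
  have k0: "fst ?k a \<in> carrier (deg0 R12)" "fst h (fst ?k a) = a" if "a \<in> carrier (deg0 R12')" for a
    using that k dgmor_inv_comp_right[OF bij0 bij1]
    unfolding is_dgmor_def dgmor_eq_def dg_comp_def dg_id_def by (auto intro: ring_hom_closed)
  have k1: "snd ?k x \<in> carrier (degm1 R12)" "snd h (snd ?k x) = x" if "x \<in> carrier (degm1 R12')" for x
    using that k dgmor_inv_comp_right[OF bij0 bij1]
    unfolding is_dgmor_def dgmor_eq_def dg_comp_def dg_id_def by auto
  have h0: "fst f' (fst h a) = fst f a" "fst g' (fst h a) = fst g a" if "a \<in> carrier (deg0 R12)" for a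
    using that h unfolding is_corr_mor_def dgmor_eq_def dg_comp_def by auto
  have h1: "snd f' (snd h x) = snd f x" "snd g' (snd h x) = snd g x" if "x \<in> carrier (degm1 R12)" for x
    using that h unfolding is_corr_mor_def dgmor_eq_def dg_comp_def by auto
  show ?thesis
    using k h0[OF k0(1)] h1[OF k1(1)] k0(2) k1(2)
    unfolding is_corr_mor_def dgmor_eq_def dg_comp_def by simp
qed

theorem lemma4p2p4:
  fixes R1 :: "('a, 'b) dgr" and R2 :: "('c, 'd) dgr"
    and R12 :: "('e, 'h) dgr" and f :: "('e, 'h, 'a, 'b) dgmor" and g :: "('e, 'h, 'c, 'd) dgmor"
    and R12' :: "('i, 'j) dgr" and f' :: "('i, 'j, 'a, 'b) dgmor" and g' :: "('i, 'j, 'c, 'd) dgmor"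
    and h :: "('e, 'h, 'i, 'j) dgmor"
  assumes "is_dgr R1" and "is_dgr R2"
    and "is_adm_corr R1 R2 R12 f g"
    and "is_adm_corr R1 R2 R12' f' g'"
    and "is_corr_mor R12 f g R12' f' g' h"
  shows "\<exists>k. is_corr_mor R12' f' g' R12 f g k \<and>
             dgmor_eq R12 (dg_comp k h) dg_id \<and>
             dgmor_eq R12' (dg_comp h k) dg_id"
proof -
  have R12: "is_dgr R12" and R12': "is_dgr R12'"
    using assms(3,4) unfolding is_adm_corr_def is_corr_def by auto
  have "is_quasi_iso R12 R12' h"
    using is_quasi_iso_comp_cancel[OF R12 R12' assms(1)] assms(3-5)
    unfolding is_adm_corr_def is_corr_mor_def by blast
  moreover have bij1: "bij_betw (snd h) (carrier (degm1 R12)) (carrier (degm1 R12'))"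
    using assms(3-5) by (rule adm_corr_mor_bij_degm1)
  ultimately have bij0: "bij_betw (fst h) (carrier (deg0 R12)) (carrier (deg0 R12'))"
    by (rule quasi_iso_bij_deg0[OF R12 R12'])
  show ?thesis
    using is_corr_mor_inv[OF R12 R12' assms(5) bij0 bij1]
      dgmor_inv_comp_left[OF bij0 bij1] dgmor_inv_comp_right[OF bij0 bij1] by blast
qed

end
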